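(* Let $m,g>0$, $k\in\mathbb{N}$, $\gamma\in\mathbb{R}$, and let $(\psi_1,\psi_2)$ be a sufficiently smooth solution, decaying with its derivatives as $|x|\to\infty$, of $$i\partial_t\psi_1=\partial_x\psi_2-g(|\psi_1|^2-|\psi_2|^2)^k\psi_1+m\psi_1+i\gamma\psi_2,\qquad i\partial_t\psi_2=-\partial_x\psi_1+g(|\psi_1|^2-|\psi_2|^2)^k\psi_2-m\psi_2+i\gamma\psi_1.$$ Then the ($\gamma$-independent) energy $$E(t)=\frac12\int_{\mathbb{R}}\Big[\overline{\psi_1}\,\partial_x\psi_2-\overline{\psi_2}\,\partial_x\psi_1+m(|\psi_1|^2-|\psi_2|^2)-\frac{g}{k+1}\big(|\psi_1|^2-|\psi_2|^2\big)^{k+1}\Big]dx$$ is real and conserved: $dE/dt=0$, for every value of $\gamma$.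
   Context: This is the $\mathcal{P}\mathcal{T}$-symmetric 1D Soler model (gain–loss term $i\gamma\sigma_1\psi$ with $\sigma_1$ the first Pauli matrix). *)

theory Defs
  imports "HOL-Analysis.Analysis"
begin

definition jcont :: "(real \<Rightarrow> real \<Rightarrow> complex) \<Rightarrow> bool" where
  "jcont v \<longleftrightarrow> continuous_on UNIV (\<lambda>z. v (fst z) (snd z))"

definition decays :: "(real \<Rightarrow> real \<Rightarrow> complex) \<Rightarrow> bool" where
  "decays v \<longleftrightarrow> (\<forall>T. \<exists>C. \<forall>t x. \<bar>t\<bar> \<le> T \<longrightarrow> norm (v t x) \<le> C / (1 + x\<^sup>2))"

definition smooth_decaying :: "(real \<Rightarrow> real \<Rightarrow> complex) \<Rightarrow> bool" where
  "smooth_decaying u \<longleftrightarrow>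
    (\<exists>ut ux utt utx uxt uxx.
      (\<forall>t x. ((\<lambda>s. u s x) has_vector_derivative ut t x) (at t)) \<and>
      (\<forall>t x. ((\<lambda>y. u t y) has_vector_derivative ux t x) (at x)) \<and>
      (\<forall>t x. ((\<lambda>s. ut s x) has_vector_derivative utt t x) (at t)) \<and>
      (\<forall>t x. ((\<lambda>y. ut t y) has_vector_derivative utx t x) (at x)) \<and>
      (\<forall>t x. ((\<lambda>s. ux s x) has_vector_derivative uxt t x) (at t)) \<and>
      (\<forall>t x. ((\<lambda>y. ux t y) has_vector_derivative uxx t x) (at x)) \<and>
      (\<forall>v\<in>{u, ut, ux, utt, utx, uxt, uxx}. jcont v \<and> decays v))"

definition dt :: "(real \<Rightarrow> real \<Rightarrow> complex) \<Rightarrow> real \<Rightarrow> real \<Rightarrow> complex" where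
  "dt u t x = vector_derivative (\<lambda>s. u s x) (at t)"

definition dx :: "(real \<Rightarrow> real \<Rightarrow> complex) \<Rightarrow> real \<Rightarrow> real \<Rightarrow> complex" where
  "dx u t x = vector_derivative (\<lambda>y. u t y) (at x)"

definition rho :: "(real \<Rightarrow> real \<Rightarrow> complex) \<Rightarrow> (real \<Rightarrow> real \<Rightarrow> complex) \<Rightarrow> real \<Rightarrow> real \<Rightarrow> real" where
  "rho p1 p2 t x = (cmod (p1 t x))\<^sup>2 - (cmod (p2 t x))\<^sup>2"

definition soler_PT_solution ::
  "real \<Rightarrow> real \<Rightarrow> nat \<Rightarrow> real \<Rightarrow> (real \<Rightarrow> real \<Rightarrow> complex) \<Rightarrow> (real \<Rightarrow> real \<Rightarrow> complex) \<Rightarrow> bool" where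
  "soler_PT_solution m g k \<gamma> p1 p2 \<longleftrightarrow>
    (\<forall>t x.
      \<i> * dt p1 t x = dx p2 t x - of_real (g * (rho p1 p2 t x) ^ k) * p1 t x
                      + of_real m * p1 t x + \<i> * of_real \<gamma> * p2 t x \<and>
      \<i> * dt p2 t x = - dx p1 t x + of_real (g * (rho p1 p2 t x) ^ k) * p2 t x
                      - of_real m * p2 t x + \<i> * of_real \<gamma> * p1 t x)"

definition soler_energy ::
  "real \<Rightarrow> real \<Rightarrow> nat \<Rightarrow> (real \<Rightarrow> real \<Rightarrow> complex) \<Rightarrow> (real \<Rightarrow> real \<Rightarrow> complex) \<Rightarrow> real \<Rightarrow> complex" where
  "soler_energy m g k p1 p2 t =
     (1/2) * integral UNIV (\<lambda>x.
        cnj (p1 t x) * dx p2 t x - cnj (p2 t x) * dx p1 t x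
        + of_real (m * rho p1 p2 t x)
        - of_real (g / (real k + 1) * (rho p1 p2 t x) ^ (k + 1)))"

end

theory Submission
  imports Defs "HOL-Probability.Sinc_Integral" "HOL-Real_Asymp.Real_Asymp"
begin

(*
  With the field equations, the time derivative of the energy density
  h = cnj \<psi>1 \<psi>2' - cnj \<psi>2 \<psi>1' + m \<rho> - g/(k+1) \<rho>^(k+1)
  is the space derivative of the flux J = cnj \<psi>1 \<partial>t\<psi>2 - cnj \<psi>2 \<partial>t\<psi>1 - \<gamma> \<rho>,
  so the gain-loss terms only enter through the flux. Integrating \<partial>t h = \<partial>x J over
  [s,t] \<times> [-R,R] and letting R \<rightarrow> \<infinity>, the decaying boundary flux disappears and the
  integral of h is conserved. Likewise h - cnj h is the x-derivative of the decaying
  function cnj \<psi>1 \<psi>2 - \<psi>1 cnj \<psi>2, so the integral of h is real. The interchange of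
  mixed partial derivatives needed for the flux computation follows from Fubini's
  theorem on rectangles.
*)

section \<open>Integrals over the real line\<close>

lemma fundamental_theorem_of_calculus_at:
  fixes f :: "real \<Rightarrow> 'a::banach"
  assumes "a \<le> b" "\<And>x. (f has_vector_derivative f' x) (at x)"
  shows "(f' has_integral (f b - f a)) {a..b}"
  using fundamental_theorem_of_calculus[OF assms(1)] has_vector_derivative_at_within assms(2)
  by blast

lemma integrable_quadratic_decay_bound:
  "(\<lambda>x::real. C / (1 + x\<^sup>2)) integrable_on UNIV"
proof -
  have "(\<lambda>x::real. inverse (1 + x\<^sup>2)) integrable_on UNIV"
    using set_borel_integral_eq_integral(1)[OF integrable_inverse_1_plus_square] by simp
  from integrable_on_cmult_left[OF this, of C] show ?thesis
    by (simp add: divide_inverse)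
qed

lemma integrable_on_UNIV_if_quadratic_decay:
  fixes f :: "real \<Rightarrow> 'a::euclidean_space"
  assumes "continuous_on UNIV f" "\<And>x. norm (f x) \<le> C / (1 + x\<^sup>2)"
  shows "f integrable_on UNIV"
  by (rule measurable_bounded_by_integrable_imp_integrable[OF _ integrable_quadratic_decay_bound])
     (use assms in \<open>auto intro: continuous_imp_measurable_on_sets_lebesgue\<close>)

lemma integral_symmetric_intervals_tendsto:
  fixes f :: "real \<Rightarrow> 'a::euclidean_space"
  assumes "f integrable_on UNIV" "\<And>x. norm (f x) \<le> C / (1 + x\<^sup>2)"
  shows "(\<lambda>n. integral {-real n..real n} f) \<longlonglongrightarrow> integral UNIV f"
proof -
  define f_n where "f_n n x = (if x \<in> {-real n..real n} then f x else 0)" for n :: nat and x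
  have "(\<lambda>n. integral UNIV (f_n n)) \<longlonglongrightarrow> integral UNIV f"
  proof (rule dominated_convergence(2))
    show "f_n n integrable_on UNIV" for n
      unfolding f_n_def integrable_restrict_UNIV
      by (rule integrable_on_subinterval[OF assms(1)]) auto
    show "(\<lambda>x. C / (1 + x\<^sup>2)) integrable_on UNIV"
      by (rule integrable_quadratic_decay_bound)
    show "norm (f_n n x) \<le> C / (1 + x\<^sup>2)" for n x
      using assms(2)[of x] order_trans[OF norm_ge_zero assms(2)[of x]] by (auto simp: f_n_def)
    show "(\<lambda>n. f_n n x) \<longlonglongrightarrow> f x" for x
    proof (rule tendsto_eventually)
      obtain N :: nat where "\<bar>x\<bar> \<le> real N" using real_arch_simple by blast
      then show "\<forall>\<^sub>F n in sequentially. f_n n x = f x"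
        by (auto simp: f_n_def eventually_sequentially intro!: exI[of _ N])
    qed
  qed
  then show ?thesis unfolding f_n_def integral_restrict_UNIV .
qed

lemma integral_eq_0_if_antiderivative_decays:
  fixes F f :: "real \<Rightarrow> 'a::euclidean_space"
  assumes "\<And>x. (F has_vector_derivative f x) (at x)" "continuous_on UNIV f"
    "\<And>x. norm (f x) \<le> C / (1 + x\<^sup>2)" "\<And>x. norm (F x) \<le> D / (1 + x\<^sup>2)"
  shows "integral UNIV f = 0"
proof -
  have "(\<lambda>n. integral {-real n..real n} f) \<longlonglongrightarrow> integral UNIV f"
    by (intro integral_symmetric_intervals_tendsto[OF _ assms(3)]
        integrable_on_UNIV_if_quadratic_decay[OF assms(2,3)])
  moreover have "(\<lambda>n. integral {-real n..real n} f) \<longlonglongrightarrow> 0"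
  proof (rule Lim_null_comparison)
    have "integral {-real n..real n} f = F (real n) - F (- real n)" for n
      by (simp add: integral_unique fundamental_theorem_of_calculus_at assms(1))
    moreover have "norm (F (real n) - F (- real n)) \<le> 2 * D / (1 + (real n)\<^sup>2)" for n
      using norm_triangle_ineq4[of "F (real n)" "F (- real n)"] assms(4)[of "real n"] assms(4)[of "- real n"]
      by simp
    ultimately show "\<forall>\<^sub>F n in sequentially. norm (integral {-real n..real n} f) \<le> 2 * D / (1 + (real n)\<^sup>2)"
      by simp
    show "(\<lambda>n. 2 * D / (1 + (real n)\<^sup>2)) \<longlonglongrightarrow> 0"
      by real_asymp
  qed
  ultimately show ?thesis
    using LIMSEQ_unique by blast
qed

section \<open>Joint continuity and mixed partial derivatives\<close>

lemma jcont_const: "jcont (\<lambda>t x. c)"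
  unfolding jcont_def by (rule continuous_on_const)

lemma jcont_add: "jcont u \<Longrightarrow> jcont v \<Longrightarrow> jcont (\<lambda>t x. u t x + v t x)"
  unfolding jcont_def by (rule continuous_on_add)

lemma jcont_diff: "jcont u \<Longrightarrow> jcont v \<Longrightarrow> jcont (\<lambda>t x. u t x - v t x)"
  unfolding jcont_def by (rule continuous_on_diff)

lemma jcont_mult: "jcont u \<Longrightarrow> jcont v \<Longrightarrow> jcont (\<lambda>t x. u t x * v t x)"
  unfolding jcont_def by (rule continuous_on_mult)

lemma jcont_cnj: "jcont u \<Longrightarrow> jcont (\<lambda>t x. cnj (u t x))"
  unfolding jcont_def by (rule continuous_on_cnj)

lemma jcont_power: "jcont u \<Longrightarrow> jcont (\<lambda>t x. u t x ^ n)"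
  unfolding jcont_def by (rule continuous_on_power)

lemmas jcont_intros = jcont_const jcont_add jcont_diff jcont_mult jcont_cnj jcont_power

lemma jcont_slice_x: "jcont v \<Longrightarrow> continuous_on S (v t)"
  unfolding jcont_def
  by (rule continuous_on_compose2[of UNIV "\<lambda>z. v (fst z) (snd z)" S "\<lambda>y. (t, y)", simplified])
     (auto intro: continuous_intros)

lemma jcont_slice_t: "jcont v \<Longrightarrow> continuous_on S (\<lambda>s. v s x)"
  unfolding jcont_def
  by (rule continuous_on_compose2[of UNIV "\<lambda>z. v (fst z) (snd z)" S "\<lambda>s. (s, x)", simplified])
     (auto intro: continuous_intros)

lemma integrable_on_slice_x: "jcont v \<Longrightarrow> v t integrable_on {a..b}"
  by (rule integrable_continuous_interval, erule jcont_slice_x)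

lemma jcont_continuous_on_case_prod: "jcont v \<Longrightarrow> continuous_on S (\<lambda>(s, y). v s y)"
  unfolding jcont_def case_prod_unfold by (erule continuous_on_subset) simp

lemma jcont_continuous_on_case_prod_swap: "jcont v \<Longrightarrow> continuous_on S (\<lambda>(y, s). v s y)"
  unfolding jcont_def case_prod_unfold
  by (rule continuous_on_compose2[of UNIV "\<lambda>z. v (fst z) (snd z)" S "\<lambda>z. (snd z, fst z)", simplified])
     (simp_all add: continuous_on_Pair continuous_on_fst continuous_on_snd continuous_on_id)

lemma integrable_on_integral_slice:
  "jcont v \<Longrightarrow> (\<lambda>s. integral {a..b} (v s)) integrable_on {c..d}"
  using integral_continuous_on_param[OF jcont_continuous_on_case_prod, of v "cbox c d" a b]
  by (simp add: cbox_interval integrable_continuous_interval)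

lemma integral_swap_jcont:
  "jcont v \<Longrightarrow> integral {x0..x1} (\<lambda>y. integral {t0..t1} (\<lambda>s. v s y))
     = integral {t0..t1} (\<lambda>s. integral {x0..x1} (v s))"
  using integral_swap_continuous[where f = "\<lambda>y s. v s y", OF jcont_continuous_on_case_prod_swap]
  by (simp add: cbox_interval)

lemma integral_integral_mixed_partial:
  fixes u ut utx :: "real \<Rightarrow> real \<Rightarrow> 'a::banach"
  assumes u_t: "\<And>t x. ((\<lambda>s. u s x) has_vector_derivative ut t x) (at t)"
    and ut_x: "\<And>t x. ((\<lambda>y. ut t y) has_vector_derivative utx t x) (at x)"
    and "t0 \<le> t1" "x0 \<le> x1"
  shows "integral {t0..t1} (\<lambda>s. integral {x0..x1} (utx s)) = u t1 x1 - u t0 x1 - (u t1 x0 - u t0 x0)"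
proof -
  have "integral {x0..x1} (utx s) = ut s x1 - ut s x0" for s
    by (intro integral_unique fundamental_theorem_of_calculus_at ut_x \<open>x0 \<le> x1\<close>)
  moreover have "((\<lambda>s. ut s x1 - ut s x0) has_integral u t1 x1 - u t0 x1 - (u t1 x0 - u t0 x0)) {t0..t1}"
    by (intro has_integral_diff fundamental_theorem_of_calculus_at u_t \<open>t0 \<le> t1\<close>)
  ultimately show ?thesis
    by (simp add: integral_unique)
qed

lemma integral_integral_mixed_partial_swapped:
  fixes u ux uxt :: "real \<Rightarrow> real \<Rightarrow> complex"
  assumes "\<And>t x. ((\<lambda>y. u t y) has_vector_derivative ux t x) (at x)"
    and "\<And>t x. ((\<lambda>s. ux s x) has_vector_derivative uxt t x) (at t)"
    and "jcont uxt" "t0 \<le> t1" "x0 \<le> x1"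
  shows "integral {t0..t1} (\<lambda>s. integral {x0..x1} (uxt s)) = u t1 x1 - u t0 x1 - (u t1 x0 - u t0 x0)"
  using integral_integral_mixed_partial[where u = "\<lambda>x t. u t x" and ut = "\<lambda>x t. ux t x"
      and utx = "\<lambda>x t. uxt t x", OF assms(1,2) \<open>x0 \<le> x1\<close> \<open>t0 \<le> t1\<close>]
    integral_swap_jcont[OF \<open>jcont uxt\<close>]
  by simp

lemma rectangle_integral_Re_pos:
  fixes E :: "real \<Rightarrow> real \<Rightarrow> complex"
  assumes "jcont E" "Re (E t x) > 0"
  obtains \<eta> where "\<eta> > 0" "Re (integral {t..t+\<eta>} (\<lambda>s. integral {x..x+\<eta>} (E s))) > 0"
proof -
  define c where "c = Re (E t x) / 2"
  have "c > 0" using assms(2) by (simp add: c_def)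
  then obtain \<delta> where "\<delta> > 0" and \<delta>: "\<And>z. dist z (t, x) < \<delta> \<Longrightarrow> dist (E (fst z) (snd z)) (E t x) < c"
    using assms(1) unfolding jcont_def continuous_on_iff by (metis UNIV_I fst_conv snd_conv)
  define \<eta> where "\<eta> = \<delta> / 3"
  have "\<eta> > 0" using \<open>\<delta> > 0\<close> by (simp add: \<eta>_def)
  have E_ge: "c \<le> Re (E s y)" if "s \<in> {t..t+\<eta>}" "y \<in> {x..x+\<eta>}" for s y
  proof -
    have "dist (s, y) (t, x) \<le> norm (s - t) + norm (y - x)"
      using norm_Pair_le[of "s - t" "y - x"] by (simp add: dist_norm)
    also have "\<dots> < \<delta>" using that \<open>\<delta> > 0\<close> by (auto simp: \<eta>_def)
    finally have "dist (E s y) (E t x) < c" using \<delta>[of "(s, y)"] by simp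
    then have "\<bar>Re (E s y) - Re (E t x)\<bar> < c"
      by (metis abs_Re_le_cmod dist_norm minus_complex.sel(1) order_le_less_trans)
    then show ?thesis unfolding c_def by linarith
  qed
  have inner_ge: "c * \<eta> \<le> Re (integral {x..x+\<eta>} (E s))" if "s \<in> {t..t+\<eta>}" for s
    using integral_component_lbound_real[of "E s" x "x+\<eta>" c 1] E_ge that \<open>\<eta> > 0\<close>
    by (auto intro!: integrable_on_slice_x[OF assms(1)])
  have "c * \<eta> * \<eta> \<le> Re (integral {t..t+\<eta>} (\<lambda>s. integral {x..x+\<eta>} (E s)))"
    using integral_component_lbound_real[of "\<lambda>s. integral {x..x+\<eta>} (E s)" t "t+\<eta>" "c * \<eta>" 1]
      inner_ge \<open>\<eta> > 0\<close>
    by (auto intro!: integrable_on_integral_slice[OF assms(1)])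
  moreover have "c * \<eta> * \<eta> > 0" using \<open>c > 0\<close> \<open>\<eta> > 0\<close> by simp
  ultimately show ?thesis using that[OF \<open>\<eta> > 0\<close>] by linarith
qed

lemma jcont_eq_0_if_rectangle_integrals_eq_0:
  fixes D :: "real \<Rightarrow> real \<Rightarrow> complex"
  assumes "jcont D"
    and "\<And>t0 t1 x0 x1. t0 \<le> t1 \<Longrightarrow> x0 \<le> x1 \<Longrightarrow> integral {t0..t1} (\<lambda>s. integral {x0..x1} (D s)) = 0"
  shows "D t x = 0"
proof (rule ccontr)
  assume "D t x \<noteq> 0"
  \<comment> \<open>After multiplication by \<open>cnj (D t x)\<close> the real part is positive near \<open>(t, x)\<close>.\<close>
  define E where "E = (\<lambda>s y. cnj (D t x) * D s y)"
  have "jcont E" unfolding E_def by (intro jcont_intros assms(1))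
  moreover have "Re (E t x) > 0"
    using \<open>D t x \<noteq> 0\<close> by (simp add: E_def complex_neq_0 power2_eq_square)
  ultimately obtain \<eta> where "\<eta> > 0" "Re (integral {t..t+\<eta>} (\<lambda>s. integral {x..x+\<eta>} (E s))) > 0"
    by (rule rectangle_integral_Re_pos)
  moreover have "integral {t..t+\<eta>} (\<lambda>s. integral {x..x+\<eta>} (E s))
      = cnj (D t x) * integral {t..t+\<eta>} (\<lambda>s. integral {x..x+\<eta>} (D s))"
    by (simp add: E_def)
  ultimately show False using assms(2)[of t "t+\<eta>" x "x+\<eta>"] by simp
qed

lemma mixed_partials_commute:
  fixes u ut ux utx uxt :: "real \<Rightarrow> real \<Rightarrow> complex"
  assumes "\<And>t x. ((\<lambda>s. u s x) has_vector_derivative ut t x) (at t)"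
    and "\<And>t x. ((\<lambda>y. u t y) has_vector_derivative ux t x) (at x)"
    and "\<And>t x. ((\<lambda>y. ut t y) has_vector_derivative utx t x) (at x)"
    and "\<And>t x. ((\<lambda>s. ux s x) has_vector_derivative uxt t x) (at t)"
    and "jcont utx" "jcont uxt"
  shows "uxt t x = utx t x"
proof -
  have D_cont: "jcont (\<lambda>s y. uxt s y - utx s y)"
    by (intro jcont_intros assms(5,6))
  have D_rect: "integral {t0..t1} (\<lambda>s. integral {x0..x1} (\<lambda>y. uxt s y - utx s y)) = 0"
    if "t0 \<le> t1" "x0 \<le> x1" for t0 t1 x0 x1
  proof -
    have "integral {t0..t1} (\<lambda>s. integral {x0..x1} (\<lambda>y. uxt s y - utx s y))
        = integral {t0..t1} (\<lambda>s. integral {x0..x1} (uxt s) - integral {x0..x1} (utx s))"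
      by (simp add: integral_diff integrable_on_slice_x assms(5,6))
    also have "\<dots> = integral {t0..t1} (\<lambda>s. integral {x0..x1} (uxt s))
        - integral {t0..t1} (\<lambda>s. integral {x0..x1} (utx s))"
      by (intro integral_diff integrable_on_integral_slice assms(5,6))
    also have "\<dots> = 0"
      using integral_integral_mixed_partial[OF assms(1,3) that]
        integral_integral_mixed_partial_swapped[OF assms(2,4,6) that] by simp
    finally show ?thesis .
  qed
  show ?thesis
    using jcont_eq_0_if_rectangle_integrals_eq_0[OF D_cont D_rect] by simp
qed

section \<open>Decay in space, locally uniformly in time\<close>

lemma quadratic_decay_bound_le:
  assumes "norm p \<le> C / (1 + (x::real)\<^sup>2)"
  shows "0 \<le> C" "norm p \<le> C"
proof -
  have "0 \<le> C / (1 + x\<^sup>2)" using norm_ge_zero assms by (rule order_trans)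
  then show "0 \<le> C" using zero_le_power2[of x] by (auto simp: zero_le_divide_iff)
  then have "C / (1 + x\<^sup>2) \<le> C / 1"
    by (intro divide_left_mono) (auto simp: add_pos_nonneg)
  with assms show "norm p \<le> C" by linarith
qed

lemma decays_slice: "decays v \<Longrightarrow> \<exists>C. \<forall>x. norm (v t x) \<le> C / (1 + x\<^sup>2)"
  unfolding decays_def by fastforce

lemma decays_add:
  assumes "decays u" "decays v"
  shows "decays (\<lambda>t x. u t x + v t x)"
  unfolding decays_def
proof
  fix T
  obtain A B where A: "\<And>t x. \<bar>t\<bar> \<le> T \<Longrightarrow> norm (u t x) \<le> A / (1 + x\<^sup>2)"
    and B: "\<And>t x. \<bar>t\<bar> \<le> T \<Longrightarrow> norm (v t x) \<le> B / (1 + x\<^sup>2)"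
    using assms unfolding decays_def by meson
  have "norm (u t x + v t x) \<le> (A + B) / (1 + x\<^sup>2)" if "\<bar>t\<bar> \<le> T" for t x
    using norm_triangle_le[OF add_mono[OF A[OF that] B[OF that]]] by (simp add: add_divide_distrib)
  then show "\<exists>C. \<forall>t x. \<bar>t\<bar> \<le> T \<longrightarrow> norm (u t x + v t x) \<le> C / (1 + x\<^sup>2)" by blast
qed

lemma decays_mult:
  assumes "decays u" "decays v"
  shows "decays (\<lambda>t x. u t x * v t x)"
  unfolding decays_def
proof
  fix T
  obtain A B where A: "\<And>t x. \<bar>t\<bar> \<le> T \<Longrightarrow> norm (u t x) \<le> A / (1 + x\<^sup>2)"
    and B: "\<And>t x. \<bar>t\<bar> \<le> T \<Longrightarrow> norm (v t x) \<le> B / (1 + x\<^sup>2)"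
    using assms unfolding decays_def by meson
  have "norm (u t x * v t x) \<le> (A * B) / (1 + x\<^sup>2)" if "\<bar>t\<bar> \<le> T" for t x
  proof -
    have "norm (u t x * v t x) \<le> A * (B / (1 + x\<^sup>2))"
      unfolding norm_mult using quadratic_decay_bound_le[OF A[OF that]] B[OF that]
      by (intro mult_mono) auto
    then show ?thesis by simp
  qed
  then show "\<exists>C. \<forall>t x. \<bar>t\<bar> \<le> T \<longrightarrow> norm (u t x * v t x) \<le> C / (1 + x\<^sup>2)" by blast
qed

lemma decays_minus: "decays v \<Longrightarrow> decays (\<lambda>t x. - v t x)"
  unfolding decays_def by simp

lemma decays_diff: "decays u \<Longrightarrow> decays v \<Longrightarrow> decays (\<lambda>t x. u t x - v t x)"
  using decays_add[of u "\<lambda>t x. - v t x"] decays_minus by simp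

lemma decays_cnj: "decays v \<Longrightarrow> decays (\<lambda>t x. cnj (v t x))"
  unfolding decays_def by simp

lemma decays_scale: "decays v \<Longrightarrow> decays (\<lambda>t x. c * v t x)"
  unfolding decays_def
proof
  fix T assume "\<forall>T. \<exists>C. \<forall>t x. \<bar>t\<bar> \<le> T \<longrightarrow> norm (v t x) \<le> C / (1 + x\<^sup>2)"
  then obtain B where B: "\<And>t x. \<bar>t\<bar> \<le> T \<Longrightarrow> norm (v t x) \<le> B / (1 + x\<^sup>2)" by meson
  have "norm (c * v t x) \<le> (norm c * B) / (1 + x\<^sup>2)" if "\<bar>t\<bar> \<le> T" for t x
    using mult_left_mono[OF B[OF that], of "norm c"] by (simp add: norm_mult)
  then show "\<exists>C. \<forall>t x. \<bar>t\<bar> \<le> T \<longrightarrow> norm (c * v t x) \<le> C / (1 + x\<^sup>2)" by blast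
qed

lemma decays_power: "decays v \<Longrightarrow> decays (\<lambda>t x. v t x ^ (n + 1))"
  by (induction n) (simp_all add: decays_mult)

lemmas decays_intros = decays_add decays_diff decays_scale decays_mult decays_cnj decays_power

section \<open>Conservation laws\<close>

lemma integral_interval_change_eq_boundary_flux:
  fixes h H J :: "real \<Rightarrow> real \<Rightarrow> complex"
  assumes h_t: "\<And>t x. ((\<lambda>s. h s x) has_vector_derivative H t x) (at t)"
    and J_x: "\<And>t x. ((\<lambda>y. J t y) has_vector_derivative H t x) (at x)"
    and "jcont h" "jcont H" "s \<le> t" "-R \<le> R"
  shows "integral {-R..R} (h t) - integral {-R..R} (h s) = integral {s..t} (\<lambda>\<tau>. J \<tau> R - J \<tau> (-R))"
proof -
  have "integral {-R..R} (h t) - integral {-R..R} (h s) = integral {-R..R} (\<lambda>x. h t x - h s x)"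
    by (simp add: integral_diff integrable_on_slice_x \<open>jcont h\<close>)
  also have "\<dots> = integral {-R..R} (\<lambda>x. integral {s..t} (\<lambda>\<tau>. H \<tau> x))"
    by (intro integral_cong integral_unique[symmetric] fundamental_theorem_of_calculus_at h_t \<open>s \<le> t\<close>)
  also have "\<dots> = integral {s..t} (\<lambda>\<tau>. integral {-R..R} (H \<tau>))"
    by (rule integral_swap_jcont[OF \<open>jcont H\<close>])
  also have "\<dots> = integral {s..t} (\<lambda>\<tau>. J \<tau> R - J \<tau> (-R))"
    by (intro integral_cong integral_unique fundamental_theorem_of_calculus_at J_x \<open>-R \<le> R\<close>)
  finally show ?thesis .
qed

lemma integrable_on_UNIV_slice: "jcont v \<Longrightarrow> decays v \<Longrightarrow> v t integrable_on UNIV"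
  using integrable_on_UNIV_if_quadratic_decay[OF jcont_slice_x] decays_slice by metis

lemma integral_symmetric_intervals_tendsto_slice:
  assumes "jcont v" "decays v"
  shows "(\<lambda>n. integral {-real n..real n} (v t)) \<longlonglongrightarrow> integral UNIV (v t)"
proof -
  obtain C where "\<And>x. norm (v t x) \<le> C / (1 + x\<^sup>2)"
    using decays_slice[OF \<open>decays v\<close>] by blast
  then show ?thesis
    by (intro integral_symmetric_intervals_tendsto integrable_on_UNIV_slice assms)
qed

lemma boundary_flux_tendsto_0:
  assumes "jcont J" "decays J" "s \<le> t"
  shows "(\<lambda>n. integral {s..t} (\<lambda>\<tau>. J \<tau> (real n) - J \<tau> (- real n))) \<longlonglongrightarrow> 0"
proof -
  obtain C where C: "\<And>\<tau> x. \<bar>\<tau>\<bar> \<le> max \<bar>s\<bar> \<bar>t\<bar> \<Longrightarrow> norm (J \<tau> x) \<le> C / (1 + x\<^sup>2)"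
    using \<open>decays J\<close> unfolding decays_def by meson
  have "norm (integral {s..t} (\<lambda>\<tau>. J \<tau> (real n) - J \<tau> (- real n)))
      \<le> (C / (1 + (real n)\<^sup>2) + C / (1 + (real n)\<^sup>2)) * (t - s)" for n
  proof (rule integral_bound[OF \<open>s \<le> t\<close>])
    show "continuous_on {s..t} (\<lambda>\<tau>. J \<tau> (real n) - J \<tau> (- real n))"
      by (intro continuous_intros jcont_slice_t \<open>jcont J\<close>)
    fix \<tau> assume "\<tau> \<in> {s..t}"
    then have \<tau>: "\<bar>\<tau>\<bar> \<le> max \<bar>s\<bar> \<bar>t\<bar>" by auto
    show "norm (J \<tau> (real n) - J \<tau> (- real n)) \<le> C / (1 + (real n)\<^sup>2) + C / (1 + (real n)\<^sup>2)"
      using norm_triangle_le_diff[OF add_mono[OF C[OF \<tau>, of "real n"] C[OF \<tau>, of "- real n"]]]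
      by simp
  qed
  then have "\<forall>\<^sub>F n in sequentially.
      norm (integral {s..t} (\<lambda>\<tau>. J \<tau> (real n) - J \<tau> (- real n))) \<le> 2 * C * (t - s) / (1 + (real n)\<^sup>2)"
    by (simp add: field_simps)
  moreover have "(\<lambda>n. 2 * C * (t - s) / (1 + (real n)\<^sup>2)) \<longlonglongrightarrow> 0"
    by real_asymp
  ultimately show ?thesis
    by (rule Lim_null_comparison)
qed

lemma integral_conserved_if_flux_decays:
  fixes h H J :: "real \<Rightarrow> real \<Rightarrow> complex"
  assumes h_t: "\<And>t x. ((\<lambda>s. h s x) has_vector_derivative H t x) (at t)"
    and J_x: "\<And>t x. ((\<lambda>y. J t y) has_vector_derivative H t x) (at x)"
    and "jcont h" "jcont H" "jcont J" "decays h" "decays J"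
  shows "integral UNIV (h t) = integral UNIV (h s)"
proof -
  have forward: "integral UNIV (h t) = integral UNIV (h s)" if "s \<le> t" for s t
  proof -
    have "(\<lambda>n. integral {-real n..real n} (h t) - integral {-real n..real n} (h s))
        \<longlonglongrightarrow> integral UNIV (h t) - integral UNIV (h s)"
      by (intro tendsto_diff integral_symmetric_intervals_tendsto_slice assms(3,6))
    moreover have "(\<lambda>n. integral {-real n..real n} (h t) - integral {-real n..real n} (h s)) \<longlonglongrightarrow> 0"
      using boundary_flux_tendsto_0[OF assms(5,7) \<open>s \<le> t\<close>]
      by (simp add: integral_interval_change_eq_boundary_flux[OF h_t J_x assms(3,4) \<open>s \<le> t\<close>])
    ultimately show ?thesis
      using LIMSEQ_unique by fastforce
  qed
  show ?thesis
    using forward[of s t] forward[of t s] by (cases "s \<le> t") auto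
qed

section \<open>The PT-symmetric Soler system\<close>

(* Pointwise content of the local conservation law: a, ax, aT, axt stand for \<psi>1 and its
   derivatives, ca, cax, ... for their conjugates (likewise b for \<psi>2), V for g \<rho>^k; the
   hypotheses are the field equations and their conjugates. *)
lemma soler_flux_identity:
  fixes a ca b cb ax cax bx cbx aT caT bT cbT axt bxt V m \<gamma> i :: complex
  assumes "i * i = -1"
    and "i * aT = bx - V * a + m * a + i * \<gamma> * b"
    and "- i * caT = cbx - V * ca + m * ca - i * \<gamma> * cb"
    and "i * bT = - ax + V * b - m * b + i * \<gamma> * a"
    and "- i * cbT = - cax + V * cb - m * cb - i * \<gamma> * ca"
  shows "caT * bx + ca * bxt - (cbT * ax + cb * axt) + (m - V) * (aT * ca + a * caT - (bT * cb + b * cbT))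
    = cax * bT + ca * bxt - (cbx * aT + cb * axt) - \<gamma> * (ax * ca + a * cax - (bx * cb + b * cbx))"
  using assms by algebra

(* \<rho> as a polynomial in the fields and their conjugates, so that the product rule applies. *)
definition rhoC :: "(real \<Rightarrow> real \<Rightarrow> complex) \<Rightarrow> (real \<Rightarrow> real \<Rightarrow> complex) \<Rightarrow> real \<Rightarrow> real \<Rightarrow> complex"
  where "rhoC a b t x = a t x * cnj (a t x) - b t x * cnj (b t x)"

lemma of_real_rho: "complex_of_real (rho a b t x) = rhoC a b t x"
  by (simp only: rho_def rhoC_def of_real_diff complex_norm_square)

lemma cnj_rhoC [simp]: "cnj (rhoC a b t x) = rhoC a b t x"
  by (simp add: rhoC_def mult.commute)

lemma jcont_rhoC: "jcont a \<Longrightarrow> jcont b \<Longrightarrow> jcont (rhoC a b)"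
  unfolding rhoC_def by (intro jcont_intros)

lemma decays_rhoC: "decays a \<Longrightarrow> decays b \<Longrightarrow> decays (rhoC a b)"
  unfolding rhoC_def by (intro decays_intros)

definition rhoC_deriv ::
  "(real \<Rightarrow> real \<Rightarrow> complex) \<Rightarrow> (real \<Rightarrow> real \<Rightarrow> complex) \<Rightarrow> (real \<Rightarrow> real \<Rightarrow> complex) \<Rightarrow>
    (real \<Rightarrow> real \<Rightarrow> complex) \<Rightarrow> real \<Rightarrow> real \<Rightarrow> complex"
  where "rhoC_deriv a b a' b' t x =
    a' t x * cnj (a t x) + a t x * cnj (a' t x) - (b' t x * cnj (b t x) + b t x * cnj (b' t x))"

lemma has_vector_derivative_rhoC_t:
  assumes "((\<lambda>s. a s x) has_vector_derivative a' t x) (at t)"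
    and "((\<lambda>s. b s x) has_vector_derivative b' t x) (at t)"
  shows "((\<lambda>s. rhoC a b s x) has_vector_derivative rhoC_deriv a b a' b' t x) (at t)"
  unfolding rhoC_def rhoC_deriv_def
  by (rule has_vector_derivative_eq_rhs, (rule derivative_eq_intros assms refl)+)
     (simp add: algebra_simps)

lemma has_vector_derivative_rhoC_x:
  assumes "((\<lambda>y. a t y) has_vector_derivative a' t x) (at x)"
    and "((\<lambda>y. b t y) has_vector_derivative b' t x) (at x)"
  shows "((\<lambda>y. rhoC a b t y) has_vector_derivative rhoC_deriv a b a' b' t x) (at x)"
  unfolding rhoC_def rhoC_deriv_def
  by (rule has_vector_derivative_eq_rhs, (rule derivative_eq_intros assms refl)+)
     (simp add: algebra_simps)

lemma has_vector_derivative_power: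
  fixes f :: "real \<Rightarrow> 'a::real_normed_field"
  assumes "(f has_vector_derivative f') (at x within S)"
  shows "((\<lambda>x. f x ^ n) has_vector_derivative of_nat n * f' * f x ^ (n - 1)) (at x within S)"
  using has_derivative_power[OF assms[unfolded has_vector_derivative_def]]
  unfolding has_vector_derivative_def
  by (rule has_derivative_eq_rhs) (simp add: fun_eq_iff scaleR_conv_of_real algebra_simps)

locale soler_solution =
  fixes m g \<gamma> :: real and k :: nat and a aT aX aM b bT bX bM :: "real \<Rightarrow> real \<Rightarrow> complex"
  assumes a_t: "\<And>t x. ((\<lambda>s. a s x) has_vector_derivative aT t x) (at t)"
    and a_x: "\<And>t x. ((\<lambda>y. a t y) has_vector_derivative aX t x) (at x)"
    and aX_t: "\<And>t x. ((\<lambda>s. aX s x) has_vector_derivative aM t x) (at t)"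
    and aT_x: "\<And>t x. ((\<lambda>y. aT t y) has_vector_derivative aM t x) (at x)"
    and b_t: "\<And>t x. ((\<lambda>s. b s x) has_vector_derivative bT t x) (at t)"
    and b_x: "\<And>t x. ((\<lambda>y. b t y) has_vector_derivative bX t x) (at x)"
    and bX_t: "\<And>t x. ((\<lambda>s. bX s x) has_vector_derivative bM t x) (at t)"
    and bT_x: "\<And>t x. ((\<lambda>y. bT t y) has_vector_derivative bM t x) (at x)"
    and jcont: "jcont a" "jcont aT" "jcont aX" "jcont aM" "jcont b" "jcont bT" "jcont bX" "jcont bM"
    and decays: "decays a" "decays aT" "decays aX" "decays b" "decays bT" "decays bX"
    and equation_a: "\<And>t x. \<i> * aT t x = bX t x - of_real g * rhoC a b t x ^ k * a t x
      + of_real m * a t x + \<i> * of_real \<gamma> * b t x"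
    and equation_b: "\<And>t x. \<i> * bT t x = - aX t x + of_real g * rhoC a b t x ^ k * b t x
      - of_real m * b t x + \<i> * of_real \<gamma> * a t x"
begin

definition energy_density :: "real \<Rightarrow> real \<Rightarrow> complex" where
  "energy_density t x = cnj (a t x) * bX t x - cnj (b t x) * aX t x + of_real m * rhoC a b t x
     - of_real (g / (real k + 1)) * rhoC a b t x ^ (k + 1)"

definition energy_flux :: "real \<Rightarrow> real \<Rightarrow> complex" where
  "energy_flux t x = cnj (a t x) * bT t x - cnj (b t x) * aT t x - of_real \<gamma> * rhoC a b t x"

definition energy_density_dt :: "real \<Rightarrow> real \<Rightarrow> complex" where
  "energy_density_dt t x =
     cnj (aT t x) * bX t x + cnj (a t x) * bM t x - (cnj (bT t x) * aX t x + cnj (b t x) * aM t x)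
     + (of_real m - of_real g * rhoC a b t x ^ k) * rhoC_deriv a b aT bT t x"

lemma has_vector_derivative_energy_density:
  "((\<lambda>s. energy_density s x) has_vector_derivative energy_density_dt t x) (at t)"
proof -
  have "g / (real k + 1) * real (k + 1) = g"
    by (simp add: add.commute)
  then have coeff: "of_real (g / (real k + 1)) * (of_nat (k + 1) :: complex) = of_real g"
    by (metis of_real_mult of_real_of_nat_eq)
  show ?thesis
    unfolding energy_density_def energy_density_dt_def
    by (rule has_vector_derivative_eq_rhs,
        (rule derivative_eq_intros a_t b_t aX_t bX_t has_vector_derivative_rhoC_t
          has_vector_derivative_power refl)+)
       (simp add: algebra_simps flip: coeff del: of_real_divide of_nat_Suc)
qed

lemma has_vector_derivative_energy_flux:
  "((\<lambda>y. energy_flux t y) has_vector_derivative energy_density_dt t x) (at x)"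
proof -
  have flux_x: "((\<lambda>y. energy_flux t y) has_vector_derivative
      cnj (aX t x) * bT t x + cnj (a t x) * bM t x - (cnj (bX t x) * aT t x + cnj (b t x) * aM t x)
      - of_real \<gamma> * rhoC_deriv a b aX bX t x) (at x)"
    unfolding energy_flux_def
    by (rule has_vector_derivative_eq_rhs,
        (rule derivative_eq_intros a_x b_x aT_x bT_x has_vector_derivative_rhoC_x refl)+)
       (simp add: algebra_simps)
  have "cnj (\<i> * aT t x) = cnj (bX t x - of_real g * rhoC a b t x ^ k * a t x
      + of_real m * a t x + \<i> * of_real \<gamma> * b t x)"
    "cnj (\<i> * bT t x) = cnj (- aX t x + of_real g * rhoC a b t x ^ k * b t x
      - of_real m * b t x + \<i> * of_real \<gamma> * a t x)"
    using equation_a equation_b by simp_all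
  then have "energy_density_dt t x = cnj (aX t x) * bT t x + cnj (a t x) * bM t x
      - (cnj (bX t x) * aT t x + cnj (b t x) * aM t x) - of_real \<gamma> * rhoC_deriv a b aX bX t x"
    unfolding energy_density_dt_def rhoC_deriv_def
    by (intro soler_flux_identity[where i = \<i>] equation_a equation_b) simp_all
  with flux_x show ?thesis by simp
qed

lemma jcont_energy_density: "jcont energy_density"
  unfolding energy_density_def[abs_def] by (intro jcont_intros jcont_rhoC jcont)

lemma jcont_energy_density_dt: "jcont energy_density_dt"
  unfolding energy_density_dt_def[abs_def] rhoC_deriv_def by (intro jcont_intros jcont_rhoC jcont)

lemma jcont_energy_flux: "jcont energy_flux"
  unfolding energy_flux_def[abs_def] by (intro jcont_intros jcont_rhoC jcont)

lemma decays_energy_density: "decays energy_density"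
  unfolding energy_density_def[abs_def] by (intro decays_intros decays_rhoC decays)

lemma decays_energy_flux: "decays energy_flux"
  unfolding energy_flux_def[abs_def] by (intro decays_intros decays_rhoC decays)

lemma integral_energy_density_conserved:
  "integral UNIV (energy_density t) = integral UNIV (energy_density s)"
  by (rule integral_conserved_if_flux_decays[OF has_vector_derivative_energy_density
        has_vector_derivative_energy_flux jcont_energy_density jcont_energy_density_dt
        jcont_energy_flux decays_energy_density decays_energy_flux])

lemma has_vector_derivative_cross_term:
  "((\<lambda>y. cnj (a t y) * b t y - a t y * cnj (b t y)) has_vector_derivative
      energy_density t x - cnj (energy_density t x)) (at x)"
  unfolding energy_density_def
  by (rule has_vector_derivative_eq_rhs, (rule derivative_eq_intros a_x b_x refl)+)
     (simp add: algebra_simps)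

lemma Im_integral_energy_density: "Im (integral UNIV (energy_density t)) = 0"
proof -
  obtain C where C: "\<And>x. norm (energy_density t x) \<le> C / (1 + x\<^sup>2)"
    using decays_slice[OF decays_energy_density] by blast
  have "decays (\<lambda>t x. cnj (a t x) * b t x - a t x * cnj (b t x))"
    by (intro decays_intros decays)
  then obtain D where D: "\<And>x. norm (cnj (a t x) * b t x - a t x * cnj (b t x)) \<le> D / (1 + x\<^sup>2)"
    using decays_slice by blast
  have "energy_density t integrable_on UNIV"
    by (rule integrable_on_UNIV_slice[OF jcont_energy_density decays_energy_density])
  then have "integral UNIV (\<lambda>x. energy_density t x - cnj (energy_density t x))
      = integral UNIV (energy_density t) - cnj (integral UNIV (energy_density t))"
    by (simp add: integral_diff integrable_on_cnj_iff Henstock_Kurzweil_Integration.integral_cnj)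
  moreover have "integral UNIV (\<lambda>x. energy_density t x - cnj (energy_density t x)) = 0"
  proof (rule integral_eq_0_if_antiderivative_decays[OF has_vector_derivative_cross_term _ _ D])
    show "continuous_on UNIV (\<lambda>x. energy_density t x - cnj (energy_density t x))"
      by (intro continuous_intros jcont_slice_x[OF jcont_energy_density])
    show "norm (energy_density t x - cnj (energy_density t x)) \<le> (C + C) / (1 + x\<^sup>2)" for x
      using norm_triangle_ineq4[of "energy_density t x" "cnj (energy_density t x)"] C[of x]
      by (simp add: add_divide_distrib)
  qed
  ultimately have "cnj (integral UNIV (energy_density t)) = integral UNIV (energy_density t)"
    by simp
  then show ?thesis
    by (simp add: complex_eq_iff)
qed

end

lemma smooth_decayingE:
  assumes "smooth_decaying u"
  obtains (derivatives) ut ux uxt where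
    "\<And>t x. ((\<lambda>s. u s x) has_vector_derivative ut t x) (at t)"
    "\<And>t x. ((\<lambda>y. u t y) has_vector_derivative ux t x) (at x)"
    "\<And>t x. ((\<lambda>s. ux s x) has_vector_derivative uxt t x) (at t)"
    "\<And>t x. ((\<lambda>y. ut t y) has_vector_derivative uxt t x) (at x)"
    "jcont u" "jcont ut" "jcont ux" "jcont uxt"
    "decays u" "decays ut" "decays ux"
    "dt u = ut" "dx u = ux"
proof -
  obtain ut ux utt utx uxt uxx where
    u_t: "\<And>t x. ((\<lambda>s. u s x) has_vector_derivative ut t x) (at t)" and
    u_x: "\<And>t x. ((\<lambda>y. u t y) has_vector_derivative ux t x) (at x)" and
    ut_x: "\<And>t x. ((\<lambda>y. ut t y) has_vector_derivative utx t x) (at x)" and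
    ux_t: "\<And>t x. ((\<lambda>s. ux s x) has_vector_derivative uxt t x) (at t)" and
    reg: "\<forall>v\<in>{u, ut, ux, utt, utx, uxt, uxx}. jcont v \<and> decays v"
    using assms unfolding smooth_decaying_def by metis
  have "uxt t x = utx t x" for t x
    using mixed_partials_commute[OF u_t u_x ut_x ux_t] reg by simp
  then have "\<And>t x. ((\<lambda>y. ut t y) has_vector_derivative uxt t x) (at x)"
    using ut_x by simp
  moreover have "dt u = ut" "dx u = ux"
    using u_t u_x by (simp_all add: fun_eq_iff dt_def dx_def vector_derivative_at)
  ultimately show ?thesis
    using reg by (intro that[OF u_t u_x ux_t]) auto
qed

lemma soler_solutionE:
  assumes "smooth_decaying \<psi>1" "smooth_decaying \<psi>2" "soler_PT_solution m g k \<gamma> \<psi>1 \<psi>2"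
  obtains aT aX aM bT bX bM where "soler_solution m g \<gamma> k \<psi>1 aT aX aM \<psi>2 bT bX bM"
    "dx \<psi>1 = aX" "dx \<psi>2 = bX"
  using assms(1)
proof (cases rule: smooth_decayingE)
  case a: (derivatives aT aX aM)
  from assms(2) show ?thesis
  proof (cases rule: smooth_decayingE)
    case b: (derivatives bT bX bM)
    have "soler_solution m g \<gamma> k \<psi>1 aT aX aM \<psi>2 bT bX bM"
      by unfold_locales (use a b assms(3) in \<open>simp_all add: soler_PT_solution_def of_real_rho\<close>)
    then show ?thesis
      by (rule that) (simp_all add: a b)
  qed
qed

theorem mainTheorem8:
  fixes m g \<gamma> :: real and k :: nat and \<psi>1 \<psi>2 :: "real \<Rightarrow> real \<Rightarrow> complex"
  assumes "m > 0" and "g > 0"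
    and "smooth_decaying \<psi>1" and "smooth_decaying \<psi>2"
    and "soler_PT_solution m g k \<gamma> \<psi>1 \<psi>2"
  shows "\<forall>t. Im (soler_energy m g k \<psi>1 \<psi>2 t) = 0
             \<and> ((soler_energy m g k \<psi>1 \<psi>2) has_vector_derivative 0) (at t)"
proof -
  obtain aT aX aM bT bX bM where "soler_solution m g \<gamma> k \<psi>1 aT aX aM \<psi>2 bT bX bM"
    and dx: "dx \<psi>1 = aX" "dx \<psi>2 = bX"
    using soler_solutionE[OF assms(3-5)] .
  then interpret soler_solution m g \<gamma> k \<psi>1 aT aX aM \<psi>2 bT bX bM
    by simp
  have "soler_energy m g k \<psi>1 \<psi>2 = (\<lambda>t. integral UNIV (energy_density t) / 2)"
    by (simp add: fun_eq_iff soler_energy_def energy_density_def[abs_def] of_real_rho dx)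
  also have "\<dots> = (\<lambda>t. integral UNIV (energy_density 0) / 2)"
    by (metis integral_energy_density_conserved)
  finally have "soler_energy m g k \<psi>1 \<psi>2 = (\<lambda>t. integral UNIV (energy_density 0) / 2)" .
  then show ?thesis
    using Im_integral_energy_density by simp
qed

end
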